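(* Let $\mathbf C$ be a symmetric monoidal restriction category. The tensor unit $I$ of $\mathrm{Aux}(\mathbf C)$ is restriction terminal: for every object $A$, the morphism $!_A=[\lambda_A^{-1},A]\colon A\to I$ is total, and every total morphism $[f,E]\colon A\to I$ of $\mathrm{Aux}(\mathbf C)$ equals $!_A$. Consequently $\mathrm{Aux}(\mathbf C)$ is affine, and the projections $\pi_1=\rho_A\circ(\mathrm{id}_A\otimes !_B)\colon A\otimes B\to A$ and $\pi_2=\lambda_B\circ(!_A\otimes\mathrm{id}_B)\colon A\otimes B\to B$ (formed in $\mathrm{Aux}(\mathbf C)$) are total.
   Context: A restriction category is a category equipped with an assignment to each morphism $f\colon A\to B$ of an endomorphism $\overline{f}\colon A\to A$ such that (i) $f\circ\overline f=f$; (ii) $\overline f\circ\overline g=\overline g\circ\overline f$ whenever $f,g$ have a common domain; (iii) $\overline{g\circ\overline f}=\overline g\circ\overline f$ whenever $f,g$ have a common domain; (iv) $\overline g\circ f=f\circ\overline{g\circ f}$ whenever $g\circ f$ is defined. A morphism $f$ is total if $\overline f=\mathrm{id}$. A (symmetric) monoidal restriction category is a restriction category with a (symmetric) monoidal structure such that $\overline{f\otimes g}=\overline f\otimes\overline g$. An object $1$ is restriction terminal if every object has exactly one total morphism to $1$; a symmetric monoidal restriction category is affine if its tensor unit is restriction terminal. Let $\mathbf C$ be a symmetric monoidal restriction category with tensor unit $I$, associator $\alpha$, left unitor $\lambda$, right unitor $\rho$. For morphisms $f\colon A\to B\otimes E$ and $f'\colon A\to B\otimes E'$ write $f\triangleright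 f'$ if $\overline f=\overline{f'}$ and there is a morphism $h\colon E\to E'$ with $(\mathrm{id}_B\otimes h)\circ f=f'$. Let $\sim$ be the equivalence relation generated by $\triangleright$. The category $\mathrm{Aux}(\mathbf C)$ has the objects of $\mathbf C$; a morphism $A\to B$ is a $\sim$-class $[f,E]$ of a morphism $f\colon A\to B\otimes E$ of $\mathbf C$; composition is $[g,E']\circ[f,E]=[\alpha\circ(g\otimes\mathrm{id}_E)\circ f,\;E'\otimes E]$; identities are $[\rho^{-1},I]$. It is a symmetric monoidal restriction category with $\overline{[f,E]}=[\rho^{-1}\circ\overline f,I]$, tensor on objects as in $\mathbf C$, $[f,E]\otimes[f',E']=[\vartheta\circ(f\otimes f'),E\otimes E']$ where $\vartheta\colon(B\otimes E)\otimes(B'\otimes E')\cong(B\otimes B')\otimes(E\otimes E')$ is the canonical isomorphism, and coherence isomorphisms $[\rho^{-1}\circ\beta,I]$ for coherence isomorphisms $\beta$ of $\mathbf C$ (unitors of $\mathrm{Aux}(\mathbf C)$ are again written $\lambda,\rho$). *)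

theory Defs
  imports Main
begin

text \<open>A (symmetric monoidal restriction) category presented by its data:
  objects of type 'o, morphisms of type 'm, with explicit carriers.
  comp g f is g after f.  assoc A B C : (A*B)*C -> A*(B*C),
  lunit A : I*A -> A,  runit A : A*I -> A,  sym A B : A*B -> B*A.\<close>

record ('o, 'm) smrc =
  obj :: "'o set"
  arr :: "'m set"
  dom :: "'m \<Rightarrow> 'o"
  cod :: "'m \<Rightarrow> 'o"
  comp :: "'m \<Rightarrow> 'm \<Rightarrow> 'm"
  idm :: "'o \<Rightarrow> 'm"
  rst :: "'m \<Rightarrow> 'm"
  tobj :: "'o \<Rightarrow> 'o \<Rightarrow> 'o"
  tarr :: "'m \<Rightarrow> 'm \<Rightarrow> 'm"
  unit :: "'o"
  assoc :: "'o \<Rightarrow> 'o \<Rightarrow> 'o \<Rightarrow> 'm"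
  lunit :: "'o \<Rightarrow> 'm"
  runit :: "'o \<Rightarrow> 'm"
  sym :: "'o \<Rightarrow> 'o \<Rightarrow> 'm"

definition hom :: "('o, 'm) smrc \<Rightarrow> 'o \<Rightarrow> 'o \<Rightarrow> 'm set" where
  "hom C A B = {f \<in> arr C. dom C f = A \<and> cod C f = B}"

definition is_iso :: "('o, 'm) smrc \<Rightarrow> 'm \<Rightarrow> bool" where
  "is_iso C f \<longleftrightarrow> f \<in> arr C \<and> (\<exists>g \<in> hom C (cod C f) (dom C f).
      comp C g f = idm C (dom C f) \<and> comp C f g = idm C (cod C f))"

definition inv_arr :: "('o, 'm) smrc \<Rightarrow> 'm \<Rightarrow> 'm" where
  "inv_arr C f = (THE g. g \<in> hom C (cod C f) (dom C f) \<and>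
      comp C g f = idm C (dom C f) \<and> comp C f g = idm C (cod C f))"

definition is_category :: "('o, 'm) smrc \<Rightarrow> bool" where
  "is_category C \<longleftrightarrow>
     (\<forall>f \<in> arr C. dom C f \<in> obj C \<and> cod C f \<in> obj C) \<and>
     (\<forall>A \<in> obj C. idm C A \<in> hom C A A) \<and>
     (\<forall>f \<in> arr C. \<forall>g \<in> arr C. cod C f = dom C g \<longrightarrow> comp C g f \<in> hom C (dom C f) (cod C g)) \<and>
     (\<forall>f \<in> arr C. comp C f (idm C (dom C f)) = f \<and> comp C (idm C (cod C f)) f = f) \<and>
     (\<forall>f \<in> arr C. \<forall>g \<in> arr C. \<forall>h \<in> arr C. cod C f = dom C g \<longrightarrow> cod C g = dom C h \<longrightarrow>
        comp C h (comp C g f) = comp C (comp C h g) f)"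

definition is_restriction_category :: "('o, 'm) smrc \<Rightarrow> bool" where
  "is_restriction_category C \<longleftrightarrow> is_category C \<and>
     (\<forall>f \<in> arr C. rst C f \<in> hom C (dom C f) (dom C f)) \<and>
     (\<forall>f \<in> arr C. comp C f (rst C f) = f) \<and>
     (\<forall>f \<in> arr C. \<forall>g \<in> arr C. dom C f = dom C g \<longrightarrow>
        comp C (rst C f) (rst C g) = comp C (rst C g) (rst C f)) \<and>
     (\<forall>f \<in> arr C. \<forall>g \<in> arr C. dom C f = dom C g \<longrightarrow>
        rst C (comp C g (rst C f)) = comp C (rst C g) (rst C f)) \<and>
     (\<forall>f \<in> arr C. \<forall>g \<in> arr C. cod C f = dom C g \<longrightarrow>
        comp C (rst C g) f = comp C f (rst C (comp C g f)))"

definition is_smrc :: "('o, 'm) smrc \<Rightarrow> bool" where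
  "is_smrc C \<longleftrightarrow> is_restriction_category C \<and>
     unit C \<in> obj C \<and>
     (\<forall>A \<in> obj C. \<forall>B \<in> obj C. tobj C A B \<in> obj C) \<and>
     \<comment> \<open>tensor is a bifunctor\<close>
     (\<forall>f \<in> arr C. \<forall>g \<in> arr C. tarr C f g \<in>
        hom C (tobj C (dom C f) (dom C g)) (tobj C (cod C f) (cod C g))) \<and>
     (\<forall>A \<in> obj C. \<forall>B \<in> obj C. tarr C (idm C A) (idm C B) = idm C (tobj C A B)) \<and>
     (\<forall>f \<in> arr C. \<forall>g \<in> arr C. \<forall>f' \<in> arr C. \<forall>g' \<in> arr C.
        cod C f = dom C g \<longrightarrow> cod C f' = dom C g' \<longrightarrow>
        tarr C (comp C g f) (comp C g' f') = comp C (tarr C g g') (tarr C f f')) \<and>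
     \<comment> \<open>structure isomorphisms\<close>
     (\<forall>A \<in> obj C. \<forall>B \<in> obj C. \<forall>D \<in> obj C.
        assoc C A B D \<in> hom C (tobj C (tobj C A B) D) (tobj C A (tobj C B D)) \<and> is_iso C (assoc C A B D)) \<and>
     (\<forall>A \<in> obj C. lunit C A \<in> hom C (tobj C (unit C) A) A \<and> is_iso C (lunit C A)) \<and>
     (\<forall>A \<in> obj C. runit C A \<in> hom C (tobj C A (unit C)) A \<and> is_iso C (runit C A)) \<and>
     (\<forall>A \<in> obj C. \<forall>B \<in> obj C. sym C A B \<in> hom C (tobj C A B) (tobj C B A) \<and> is_iso C (sym C A B)) \<and>
     \<comment> \<open>naturality\<close>
     (\<forall>f \<in> arr C. \<forall>g \<in> arr C. \<forall>h \<in> arr C.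
        comp C (assoc C (cod C f) (cod C g) (cod C h)) (tarr C (tarr C f g) h) =
        comp C (tarr C f (tarr C g h)) (assoc C (dom C f) (dom C g) (dom C h))) \<and>
     (\<forall>f \<in> arr C. comp C (lunit C (cod C f)) (tarr C (idm C (unit C)) f) = comp C f (lunit C (dom C f))) \<and>
     (\<forall>f \<in> arr C. comp C (runit C (cod C f)) (tarr C f (idm C (unit C))) = comp C f (runit C (dom C f))) \<and>
     (\<forall>f \<in> arr C. \<forall>g \<in> arr C.
        comp C (sym C (cod C f) (cod C g)) (tarr C f g) = comp C (tarr C g f) (sym C (dom C f) (dom C g))) \<and>
     \<comment> \<open>coherence: pentagon, triangle, hexagon, symmetry\<close>
     (\<forall>A \<in> obj C. \<forall>B \<in> obj C. \<forall>D \<in> obj C. \<forall>E \<in> obj C.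
        comp C (assoc C A B (tobj C D E)) (assoc C (tobj C A B) D E) =
        comp C (tarr C (idm C A) (assoc C B D E))
          (comp C (assoc C A (tobj C B D) E) (tarr C (assoc C A B D) (idm C E)))) \<and>
     (\<forall>A \<in> obj C. \<forall>B \<in> obj C.
        comp C (tarr C (idm C A) (lunit C B)) (assoc C A (unit C) B) = tarr C (runit C A) (idm C B)) \<and>
     (\<forall>A \<in> obj C. \<forall>B \<in> obj C. \<forall>D \<in> obj C.
        comp C (assoc C B D A) (comp C (sym C A (tobj C B D)) (assoc C A B D)) =
        comp C (tarr C (idm C B) (sym C A D))
          (comp C (assoc C B A D) (tarr C (sym C A B) (idm C D)))) \<and>
     (\<forall>A \<in> obj C. \<forall>B \<in> obj C. comp C (sym C B A) (sym C A B) = idm C (tobj C A B)) \<and>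
     \<comment> \<open>monoidal restriction\<close>
     (\<forall>f \<in> arr C. \<forall>g \<in> arr C. rst C (tarr C f g) = tarr C (rst C f) (rst C g))"

text \<open>The canonical isomorphism (B*E)*(B'*E') -> (B*B')*(E*E').\<close>
definition theta :: "('o, 'm) smrc \<Rightarrow> 'o \<Rightarrow> 'o \<Rightarrow> 'o \<Rightarrow> 'o \<Rightarrow> 'm" where
  "theta C B E B' E' =
     comp C (inv_arr C (assoc C B B' (tobj C E E')))
      (comp C (tarr C (idm C B)
                 (comp C (assoc C B' E E')
                   (comp C (tarr C (sym C E B') (idm C E')) (inv_arr C (assoc C E B' E')))))
        (assoc C B E (tobj C B' E')))"

text \<open>A morphism A -> B of Aux(C) is represented by a pair (f, E) with
  f : A -> B*E; two representatives denote the same Aux-morphism iff they are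
  related by the equivalence relation generated by the step relation.\<close>

definition aux_step :: "('o, 'm) smrc \<Rightarrow> 'o \<Rightarrow> 'o \<Rightarrow> ('m \<times> 'o) \<Rightarrow> ('m \<times> 'o) \<Rightarrow> bool" where
  "aux_step C A B p q \<longleftrightarrow> (case p of (f, E) \<Rightarrow> case q of (f', E') \<Rightarrow>
     E \<in> obj C \<and> E' \<in> obj C \<and>
     f \<in> hom C A (tobj C B E) \<and> f' \<in> hom C A (tobj C B E') \<and>
     rst C f = rst C f' \<and>
     (\<exists>h \<in> hom C E E'. comp C (tarr C (idm C B) h) f = f'))"

definition aux_eq :: "('o, 'm) smrc \<Rightarrow> 'o \<Rightarrow> 'o \<Rightarrow> ('m \<times> 'o) \<Rightarrow> ('m \<times> 'o) \<Rightarrow> bool" where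
  "aux_eq C A B = equivclp (aux_step C A B)"

definition aux_id :: "('o, 'm) smrc \<Rightarrow> 'o \<Rightarrow> 'm \<times> 'o" where
  "aux_id C A = (inv_arr C (runit C A), unit C)"

text \<open>Composition [g,E'] o [f,E] where g : Y -> Z*E' (Z given explicitly).\<close>
definition aux_comp :: "('o, 'm) smrc \<Rightarrow> 'o \<Rightarrow> 'm \<times> 'o \<Rightarrow> 'm \<times> 'o \<Rightarrow> 'm \<times> 'o" where
  "aux_comp C Z p q = (case p of (g, E') \<Rightarrow> case q of (f, E) \<Rightarrow>
     (comp C (assoc C Z E' E) (comp C (tarr C g (idm C E)) f), tobj C E' E))"

definition aux_rst :: "('o, 'm) smrc \<Rightarrow> 'm \<times> 'o \<Rightarrow> 'm \<times> 'o" where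
  "aux_rst C p = (case p of (f, E) \<Rightarrow> (comp C (inv_arr C (runit C (dom C f))) (rst C f), unit C))"

text \<open>Tensor [f,E] * [f',E'] where f : A -> B*E, f' : A' -> B'*E'.\<close>
definition aux_tensor :: "('o, 'm) smrc \<Rightarrow> 'o \<Rightarrow> 'o \<Rightarrow> 'm \<times> 'o \<Rightarrow> 'm \<times> 'o \<Rightarrow> 'm \<times> 'o" where
  "aux_tensor C B B' p q = (case p of (f, E) \<Rightarrow> case q of (f', E') \<Rightarrow>
     (comp C (theta C B E B' E') (tarr C f f'), tobj C E E'))"

text \<open>Coherence isomorphism of Aux(C) induced by a coherence iso beta of C.\<close>
definition aux_coh :: "('o, 'm) smrc \<Rightarrow> 'm \<Rightarrow> 'm \<times> 'o" where
  "aux_coh C \<beta> = (comp C (inv_arr C (runit C (cod C \<beta>))) \<beta>, unit C)"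

definition aux_total :: "('o, 'm) smrc \<Rightarrow> 'o \<Rightarrow> 'm \<times> 'o \<Rightarrow> bool" where
  "aux_total C A p \<longleftrightarrow> aux_eq C A A (aux_rst C p) (aux_id C A)"

definition aux_bang :: "('o, 'm) smrc \<Rightarrow> 'o \<Rightarrow> 'm \<times> 'o" where
  "aux_bang C A = (inv_arr C (lunit C A), A)"

definition aux_pi1 :: "('o, 'm) smrc \<Rightarrow> 'o \<Rightarrow> 'o \<Rightarrow> 'm \<times> 'o" where
  "aux_pi1 C A B = aux_comp C A (aux_coh C (runit C A))
      (aux_tensor C A (unit C) (aux_id C A) (aux_bang C B))"

definition aux_pi2 :: "('o, 'm) smrc \<Rightarrow> 'o \<Rightarrow> 'o \<Rightarrow> 'm \<times> 'o" where
  "aux_pi2 C A B = aux_comp C B (aux_coh C (lunit C B))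
      (aux_tensor C (unit C) B (aux_bang C A) (aux_id C B))"

end

theory Submission
  imports Defs
begin

text \<open>The restriction of the representative is invariant under each generating step
  \<open>\<triangleright>\<close>, hence constant on \<open>\<sim>\<close>-classes. So \<open>[f,E] : A \<rightarrow> I\<close> is total exactly when \<open>f\<close> is
  total in \<open>C\<close>, and then \<open>h = \<lambda>\<^sub>E \<circ> f\<close> witnesses \<open>!\<^sub>A \<triangleright> [f,E]\<close> by naturality of \<open>\<lambda>\<close>.
  Isomorphisms are total, so every Aux-morphism represented by an isomorphism of \<open>C\<close>
  is total; this covers \<open>!\<^sub>A\<close> and both projections.\<close>

locale category =
  fixes C :: "('o, 'm) smrc"
  assumes category: "is_category C"
begin

lemma hom_objs: "f \<in> hom C X Y \<Longrightarrow> X \<in> obj C \<and> Y \<in> obj C"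
  using category unfolding is_category_def hom_def by blast

lemma id_in_hom: "A \<in> obj C \<Longrightarrow> idm C A \<in> hom C A A"
  using category unfolding is_category_def by blast

lemma comp_in_hom: "f \<in> hom C X Y \<Longrightarrow> g \<in> hom C Y Z \<Longrightarrow> comp C g f \<in> hom C X Z"
  using category unfolding is_category_def hom_def by auto

lemma comp_id_right: "f \<in> hom C X Y \<Longrightarrow> comp C f (idm C X) = f"
  using category unfolding is_category_def hom_def by auto

lemma comp_id_left: "f \<in> hom C X Y \<Longrightarrow> comp C (idm C Y) f = f"
  using category unfolding is_category_def hom_def by auto

lemma comp_assoc:
  "f \<in> hom C X Y \<Longrightarrow> g \<in> hom C Y Z \<Longrightarrow> h \<in> hom C Z W \<Longrightarrow>
    comp C h (comp C g f) = comp C (comp C h g) f"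
  using category unfolding is_category_def hom_def by auto

lemma left_inverse_eq_right_inverse:
  assumes f: "f \<in> hom C X Y" and g: "g \<in> hom C Y X" and g': "g' \<in> hom C Y X"
    and gf: "comp C g f = idm C X" and fg': "comp C f g' = idm C Y"
  shows "g = g'"
proof -
  have "g = comp C g (comp C f g')" using comp_id_right[OF g] fg' by simp
  also have "\<dots> = comp C (comp C g f) g'" using comp_assoc[OF g' f g] .
  also have "\<dots> = g'" using comp_id_left[OF g'] gf by simp
  finally show ?thesis .
qed

lemma inv_arr:
  assumes iso: "is_iso C f" and f: "f \<in> hom C X Y"
  shows "inv_arr C f \<in> hom C Y X" "comp C (inv_arr C f) f = idm C X"
    "comp C f (inv_arr C f) = idm C Y"
proof -
  have XY: "dom C f = X" "cod C f = Y" using f unfolding hom_def by auto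
  obtain g where g: "g \<in> hom C Y X" "comp C g f = idm C X" "comp C f g = idm C Y"
    using iso XY unfolding is_iso_def by auto
  have "inv_arr C f = g"
    unfolding inv_arr_def XY
  proof (rule the_equality)
    show "g \<in> hom C Y X \<and> comp C g f = idm C X \<and> comp C f g = idm C Y" using g by blast
    show "g' = g" if "g' \<in> hom C Y X \<and> comp C g' f = idm C X \<and> comp C f g' = idm C Y" for g'
      using that left_inverse_eq_right_inverse[OF f _ g(1) _ g(3)] by blast
  qed
  with g show "inv_arr C f \<in> hom C Y X" "comp C (inv_arr C f) f = idm C X"
    "comp C f (inv_arr C f) = idm C Y" by simp_all
qed

definition iso_hom :: "'o \<Rightarrow> 'o \<Rightarrow> 'm set" where
  "iso_hom X Y = {f \<in> hom C X Y. is_iso C f}"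

lemma iso_hom_imp_hom: "f \<in> iso_hom X Y \<Longrightarrow> f \<in> hom C X Y"
  unfolding iso_hom_def by simp

lemma iso_homI:
  assumes "f \<in> hom C X Y" "g \<in> hom C Y X" "comp C g f = idm C X" "comp C f g = idm C Y"
  shows "f \<in> iso_hom X Y"
  using assms unfolding iso_hom_def is_iso_def hom_def by auto

lemma id_in_iso_hom: "A \<in> obj C \<Longrightarrow> idm C A \<in> iso_hom A A"
  using id_in_hom comp_id_right by (intro iso_homI) auto

lemma inv_in_iso_hom:
  assumes "f \<in> iso_hom X Y" shows "inv_arr C f \<in> iso_hom Y X"
proof -
  have "is_iso C f" "f \<in> hom C X Y" using assms unfolding iso_hom_def by auto
  from inv_arr[OF this] show ?thesis using \<open>f \<in> hom C X Y\<close> by (intro iso_homI)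
qed

lemma comp_in_iso_hom:
  assumes f: "f \<in> iso_hom X Y" and g: "g \<in> iso_hom Y Z"
  shows "comp C g f \<in> iso_hom X Z"
proof -
  have f': "f \<in> hom C X Y" and g': "g \<in> hom C Y Z" and "is_iso C f" "is_iso C g"
    using f g unfolding iso_hom_def by auto
  note F = inv_arr[OF \<open>is_iso C f\<close> f'] and G = inv_arr[OF \<open>is_iso C g\<close> g']
  have gf: "comp C g f \<in> hom C X Z" and h: "comp C (inv_arr C f) (inv_arr C g) \<in> hom C Z X"
    using comp_in_hom f' g' F G by auto
  have "comp C (comp C (inv_arr C f) (inv_arr C g)) (comp C g f)
      = comp C (inv_arr C f) (comp C (comp C (inv_arr C g) g) f)"
    using comp_assoc[OF gf G(1) F(1)] comp_assoc[OF f' g' G(1)] by simp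
  also have "\<dots> = idm C X" using F G comp_id_left[OF f'] by simp
  finally have left: "comp C (comp C (inv_arr C f) (inv_arr C g)) (comp C g f) = idm C X" .
  have "comp C (comp C g f) (comp C (inv_arr C f) (inv_arr C g))
      = comp C g (comp C (comp C f (inv_arr C f)) (inv_arr C g))"
    using comp_assoc[OF h f' g'] comp_assoc[OF G(1) F(1) f'] by simp
  also have "\<dots> = idm C Z" using F G comp_id_left[OF G(1)] by simp
  finally have right: "comp C (comp C g f) (comp C (inv_arr C f) (inv_arr C g)) = idm C Z" .
  from gf h left right show ?thesis by (rule iso_homI)
qed

lemma comp_inv_cancel_left:
  assumes "g \<in> iso_hom Y Z" "x \<in> hom C X Y"
  shows "comp C (inv_arr C g) (comp C g x) = x"
proof -
  have "g \<in> hom C Y Z" "is_iso C g" using assms(1) unfolding iso_hom_def by auto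
  note G = inv_arr[OF this(2,1)]
  show ?thesis
    using comp_assoc[OF assms(2) \<open>g \<in> hom C Y Z\<close> G(1)] G(2) comp_id_left[OF assms(2)] by simp
qed

lemma comp_inv_cancel_right:
  assumes "g \<in> iso_hom Y Z" "x \<in> hom C Z W"
  shows "comp C (comp C x g) (inv_arr C g) = x"
proof -
  have "g \<in> hom C Y Z" "is_iso C g" using assms(1) unfolding iso_hom_def by auto
  note G = inv_arr[OF this(2,1)]
  show ?thesis
    using comp_assoc[OF G(1) \<open>g \<in> hom C Y Z\<close> assms(2)] G(3) comp_id_right[OF assms(2)] by simp
qed

end

locale restriction_category =
  fixes C :: "('o, 'm) smrc"
  assumes restriction_category: "is_restriction_category C"

sublocale restriction_category \<subseteq> category
  using restriction_category unfolding is_restriction_category_def by unfold_locales (elim conjE)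

context restriction_category
begin

lemma rst_in_hom:
  assumes "f \<in> hom C X Y" shows "rst C f \<in> hom C X X"
proof -
  have "\<forall>f \<in> arr C. rst C f \<in> hom C (dom C f) (dom C f)"
    using restriction_category unfolding is_restriction_category_def by (elim conjE)
  with assms show ?thesis unfolding hom_def by blast
qed

lemma comp_rst:
  assumes "f \<in> hom C X Y" shows "comp C f (rst C f) = f"
proof -
  have "\<forall>f \<in> arr C. comp C f (rst C f) = f"
    using restriction_category unfolding is_restriction_category_def by (elim conjE)
  with assms show ?thesis unfolding hom_def by blast
qed

lemma rst_comp_rst:
  assumes "f \<in> hom C X Y" "g \<in> hom C X Z"
  shows "rst C (comp C g (rst C f)) = comp C (rst C g) (rst C f)"
proof -
  have "\<forall>f \<in> arr C. \<forall>g \<in> arr C. dom C f = dom C g \<longrightarrow>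
      rst C (comp C g (rst C f)) = comp C (rst C g) (rst C f)"
    using restriction_category unfolding is_restriction_category_def by (elim conjE)
  with assms show ?thesis unfolding hom_def by auto
qed

lemma rst_iso:
  assumes "f \<in> iso_hom X Y" shows "rst C f = idm C X"
proof -
  have f: "f \<in> hom C X Y" and "is_iso C f" using assms unfolding iso_hom_def by auto
  note F = inv_arr[OF \<open>is_iso C f\<close> f]
  have r: "rst C f \<in> hom C X X" using rst_in_hom[OF f] .
  have "rst C f = comp C (comp C (inv_arr C f) f) (rst C f)"
    using comp_id_left[OF r] F(2) by simp
  also have "\<dots> = idm C X"
    using comp_assoc[OF r f F(1)] comp_rst[OF f] F(2) by simp
  finally show ?thesis .
qed

end

locale sm_restriction_category =
  fixes C :: "('o, 'm) smrc"
  assumes sm_restriction_category: "is_smrc C"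

sublocale sm_restriction_category \<subseteq> restriction_category
  using sm_restriction_category unfolding is_smrc_def by unfold_locales (elim conjE)

context sm_restriction_category
begin

lemma unit_obj: "unit C \<in> obj C"
  using sm_restriction_category unfolding is_smrc_def by (elim conjE) blast

lemma tobj_obj: "A \<in> obj C \<Longrightarrow> B \<in> obj C \<Longrightarrow> tobj C A B \<in> obj C"
  using sm_restriction_category unfolding is_smrc_def by (elim conjE) blast

lemma tensor_in_hom:
  "f \<in> hom C X Y \<Longrightarrow> g \<in> hom C X' Y' \<Longrightarrow> tarr C f g \<in> hom C (tobj C X X') (tobj C Y Y')"
  using sm_restriction_category unfolding is_smrc_def by (elim conjE) (auto simp: hom_def)

lemma tensor_id: "A \<in> obj C \<Longrightarrow> B \<in> obj C \<Longrightarrow> tarr C (idm C A) (idm C B) = idm C (tobj C A B)"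
  using sm_restriction_category unfolding is_smrc_def by (elim conjE) blast

lemma tensor_comp:
  "f \<in> hom C X Y \<Longrightarrow> g \<in> hom C Y Z \<Longrightarrow> f' \<in> hom C X' Y' \<Longrightarrow> g' \<in> hom C Y' Z' \<Longrightarrow>
    tarr C (comp C g f) (comp C g' f') = comp C (tarr C g g') (tarr C f f')"
  using sm_restriction_category unfolding is_smrc_def by (elim conjE) (auto simp: hom_def)

lemma lunit_natural:
  "f \<in> hom C X Y \<Longrightarrow> comp C (lunit C Y) (tarr C (idm C (unit C)) f) = comp C f (lunit C X)"
  using sm_restriction_category unfolding is_smrc_def by (elim conjE) (auto simp: hom_def)

lemma assoc_in_iso_hom:
  "A \<in> obj C \<Longrightarrow> B \<in> obj C \<Longrightarrow> D \<in> obj C \<Longrightarrow>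
    assoc C A B D \<in> iso_hom (tobj C (tobj C A B) D) (tobj C A (tobj C B D))"
  using sm_restriction_category unfolding is_smrc_def iso_hom_def by (elim conjE) blast

lemma lunit_in_iso_hom: "A \<in> obj C \<Longrightarrow> lunit C A \<in> iso_hom (tobj C (unit C) A) A"
  using sm_restriction_category unfolding is_smrc_def iso_hom_def by (elim conjE) blast

lemma runit_in_iso_hom: "A \<in> obj C \<Longrightarrow> runit C A \<in> iso_hom (tobj C A (unit C)) A"
  using sm_restriction_category unfolding is_smrc_def iso_hom_def by (elim conjE) blast

lemma sym_in_iso_hom: "A \<in> obj C \<Longrightarrow> B \<in> obj C \<Longrightarrow> sym C A B \<in> iso_hom (tobj C A B) (tobj C B A)"
  using sm_restriction_category unfolding is_smrc_def iso_hom_def by (elim conjE) blast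

lemma tensor_in_iso_hom:
  assumes f: "f \<in> iso_hom X Y" and g: "g \<in> iso_hom X' Y'"
  shows "tarr C f g \<in> iso_hom (tobj C X X') (tobj C Y Y')"
proof -
  have f': "f \<in> hom C X Y" and g': "g \<in> hom C X' Y'" and "is_iso C f" "is_iso C g"
    using f g unfolding iso_hom_def by auto
  note F = inv_arr[OF \<open>is_iso C f\<close> f'] and G = inv_arr[OF \<open>is_iso C g\<close> g']
  have objs: "X \<in> obj C" "Y \<in> obj C" "X' \<in> obj C" "Y' \<in> obj C"
    using hom_objs f' g' by auto
  show ?thesis
  proof (rule iso_homI)
    show "comp C (tarr C (inv_arr C f) (inv_arr C g)) (tarr C f g) = idm C (tobj C X X')"
      using tensor_comp[OF f' F(1) g' G(1)] F G tensor_id objs by simp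
    show "comp C (tarr C f g) (tarr C (inv_arr C f) (inv_arr C g)) = idm C (tobj C Y Y')"
      using tensor_comp[OF F(1) f' G(1) g'] F G tensor_id objs by simp
  qed (use tensor_in_hom f' g' F G in auto)
qed

lemmas iso_hom_intros = id_in_iso_hom comp_in_iso_hom inv_in_iso_hom tensor_in_iso_hom
  assoc_in_iso_hom lunit_in_iso_hom runit_in_iso_hom sym_in_iso_hom tobj_obj unit_obj

lemma theta_in_iso_hom:
  "B \<in> obj C \<Longrightarrow> E \<in> obj C \<Longrightarrow> B' \<in> obj C \<Longrightarrow> E' \<in> obj C \<Longrightarrow>
    theta C B E B' E' \<in> iso_hom (tobj C (tobj C B E) (tobj C B' E')) (tobj C (tobj C B B') (tobj C E E'))"
  unfolding theta_def by (rule iso_hom_intros | assumption)+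

lemma lunit_factorization:
  assumes f: "f \<in> hom C A (tobj C (unit C) E)" and E: "E \<in> obj C"
  shows "comp C (tarr C (idm C (unit C)) (comp C (lunit C E) f)) (inv_arr C (lunit C A)) = f"
proof -
  have A: "A \<in> obj C" using hom_objs[OF f] by blast
  note lA = lunit_in_iso_hom[OF A] and lE = lunit_in_iso_hom[OF E]
  define h where "h = comp C (lunit C E) f"
  have h: "h \<in> hom C A E" unfolding h_def using comp_in_hom f lE iso_hom_imp_hom by blast
  have t: "tarr C (idm C (unit C)) h \<in> hom C (tobj C (unit C) A) (tobj C (unit C) E)"
    using tensor_in_hom[OF id_in_hom[OF unit_obj] h] .
  have lA': "inv_arr C (lunit C A) \<in> hom C A (tobj C (unit C) A)"
    and lE': "inv_arr C (lunit C E) \<in> hom C E (tobj C (unit C) E)"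
    using lA lE inv_in_iso_hom iso_hom_imp_hom by blast+
  have hl: "comp C h (lunit C A) \<in> hom C (tobj C (unit C) A) E"
    using comp_in_hom h lA iso_hom_imp_hom by blast
  have "tarr C (idm C (unit C)) h = comp C (inv_arr C (lunit C E)) (comp C h (lunit C A))"
    using comp_inv_cancel_left[OF lE t] lunit_natural[OF h] by simp
  then have "comp C (tarr C (idm C (unit C)) h) (inv_arr C (lunit C A))
      = comp C (inv_arr C (lunit C E)) (comp C (comp C h (lunit C A)) (inv_arr C (lunit C A)))"
    using comp_assoc[OF lA' hl lE'] by simp
  also have "\<dots> = f"
    using comp_inv_cancel_right[OF lA h] comp_inv_cancel_left[OF lE f] unfolding h_def by simp
  finally show ?thesis unfolding h_def .
qed

lemma aux_total_if_iso:
  assumes "F \<in> iso_hom X Y" shows "aux_total C X (F, E)"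
proof -
  have "dom C F = X" using assms unfolding iso_hom_def hom_def by auto
  moreover have "X \<in> obj C" using hom_objs assms iso_hom_imp_hom by blast
  then have "inv_arr C (runit C X) \<in> hom C X (tobj C X (unit C))"
    using inv_in_iso_hom runit_in_iso_hom iso_hom_imp_hom by blast
  ultimately have "aux_rst C (F, E) = aux_id C X"
    using rst_iso[OF assms] comp_id_right unfolding aux_rst_def aux_id_def by simp
  then show ?thesis unfolding aux_total_def aux_eq_def by simp
qed

lemma aux_total_bang: "A \<in> obj C \<Longrightarrow> aux_total C A (aux_bang C A)"
  unfolding aux_bang_def by (rule aux_total_if_iso) (rule iso_hom_intros | assumption)+

lemma aux_eq_imp_rst_fst_eq: "aux_eq C A B p q \<Longrightarrow> rst C (fst p) = rst C (fst q)"
  unfolding aux_eq_def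
proof (induction rule: equivclp_induct)
  case (step y z) then show ?case unfolding aux_step_def by (auto split: prod.splits)
qed simp

lemma rst_eq_id_if_aux_total:
  assumes f: "f \<in> hom C A Y" and total: "aux_total C A (f, E)"
  shows "rst C f = idm C A"
proof -
  have "A \<in> obj C" using hom_objs[OF f] by blast
  then have r: "inv_arr C (runit C A) \<in> iso_hom A (tobj C A (unit C))"
    by (intro iso_hom_intros)
  have "dom C f = A" using f unfolding hom_def by simp
  then have "rst C (comp C (inv_arr C (runit C A)) (rst C f)) = idm C A"
    using aux_eq_imp_rst_fst_eq[OF total[unfolded aux_total_def]] rst_iso[OF r]
    unfolding aux_rst_def aux_id_def by simp
  moreover have "rst C (comp C (inv_arr C (runit C A)) (rst C f)) = rst C f"
    using rst_comp_rst[OF f iso_hom_imp_hom[OF r]] rst_iso[OF r] comp_id_left[OF rst_in_hom[OF f]]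
    by simp
  ultimately show ?thesis by simp
qed

lemma aux_eq_bang_if_total:
  assumes f: "f \<in> hom C A (tobj C (unit C) E)" and E: "E \<in> obj C"
    and total: "aux_total C A (f, E)"
  shows "aux_eq C A (unit C) (f, E) (aux_bang C A)"
proof -
  have A: "A \<in> obj C" using hom_objs[OF f] by blast
  have lA: "inv_arr C (lunit C A) \<in> iso_hom A (tobj C (unit C) A)"
    using A by (intro iso_hom_intros)
  have "comp C (lunit C E) f \<in> hom C A E"
    using comp_in_hom f lunit_in_iso_hom[OF E] iso_hom_imp_hom by blast
  moreover have "rst C (inv_arr C (lunit C A)) = rst C f"
    using rst_iso[OF lA] rst_eq_id_if_aux_total[OF f total] by simp
  ultimately have "aux_step C A (unit C) (aux_bang C A) (f, E)"
    unfolding aux_step_def aux_bang_def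
    using A E f iso_hom_imp_hom[OF lA] lunit_factorization[OF f E] by auto
  then show ?thesis unfolding aux_eq_def by blast
qed

lemma aux_total_pi1:
  assumes "A \<in> obj C" "B \<in> obj C" shows "aux_total C (tobj C A B) (aux_pi1 C A B)"
proof -
  have cod: "cod C (runit C A) = A"
    using runit_in_iso_hom[OF assms(1)] unfolding iso_hom_def hom_def by simp
  show ?thesis
    unfolding aux_pi1_def aux_comp_def aux_coh_def aux_tensor_def aux_id_def aux_bang_def prod.case cod
    using assms by - (rule aux_total_if_iso iso_hom_intros theta_in_iso_hom | assumption)+
qed

lemma aux_total_pi2:
  assumes "A \<in> obj C" "B \<in> obj C" shows "aux_total C (tobj C A B) (aux_pi2 C A B)"
proof -
  have cod: "cod C (lunit C B) = B"
    using lunit_in_iso_hom[OF assms(2)] unfolding iso_hom_def hom_def by simp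
  show ?thesis
    unfolding aux_pi2_def aux_comp_def aux_coh_def aux_tensor_def aux_id_def aux_bang_def prod.case cod
    using assms by - (rule aux_total_if_iso iso_hom_intros theta_in_iso_hom | assumption)+
qed

end

theorem mainTheorem5:
  fixes C :: "('o, 'm) smrc"
  assumes "is_smrc C"
  shows "(\<forall>A \<in> obj C. aux_total C A (aux_bang C A))
       \<and> (\<forall>A \<in> obj C. \<forall>E \<in> obj C. \<forall>f \<in> hom C A (tobj C (unit C) E).
            aux_total C A (f, E) \<longrightarrow> aux_eq C A (unit C) (f, E) (aux_bang C A))
       \<and> (\<forall>A \<in> obj C. \<forall>B \<in> obj C.
            aux_total C (tobj C A B) (aux_pi1 C A B) \<and> aux_total C (tobj C A B) (aux_pi2 C A B))"
proof -
  interpret sm_restriction_category C using assms by unfold_locales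
  show ?thesis
    using aux_total_bang aux_eq_bang_if_total aux_total_pi1 aux_total_pi2 by blast
qed

end
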